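(* Let $1\le p\le\infty$. There is no sequence $(x_n)_{n\ge1}\subset[0,1]$ and finite constant $C_p$ such that, with $\mu_N:=\frac1N\sum_{n=1}^N\delta_{x_n}$, \[ W_p(\mu_N,\lambda_1)\le C_p\,N^{-1}\qquad\text{for all }N\in\mathbb{N}. \]
   Context: $\lambda_1$ is Lebesgue measure on $[0,1]$. For Borel probability measures $\mu,\nu$ on $[0,1]$, $\Pi(\mu,\nu)$ denotes the set of couplings; for $1\le p<\infty$, $W_p(\mu,\nu):=\bigl(\inf_{\pi\in\Pi(\mu,\nu)}\int|x-y|^p\,d\pi\bigr)^{1/p}$, and $W_\infty(\mu,\nu):=\inf_{\pi\in\Pi(\mu,\nu)}\operatorname{ess\,sup}_{(x,y)\sim\pi}|x-y|$. *)

theory Defs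
  imports "HOL-Probability.Probability"
begin

text \<open>Borel probability measures on [0,1] are represented as probability measures on
  the Borel sets of the real line (concentrated on [0,1]).\<close>

definition lambda1 :: "real measure" where
  "lambda1 = density lborel (indicator {0..1})"

definition empirical :: "(nat \<Rightarrow> real) \<Rightarrow> nat \<Rightarrow> real measure" where
  "empirical x N = distr (uniform_measure (count_space UNIV) {1..N}) borel x"

definition couplings :: "real measure \<Rightarrow> real measure \<Rightarrow> (real \<times> real) measure set" where
  "couplings \<mu> \<nu> = {\<pi>. sets \<pi> = sets (borel \<Otimes>\<^sub>M borel) \<and> prob_space \<pi> \<and>
      distr \<pi> borel fst = \<mu> \<and> distr \<pi> borel snd = \<nu>}"

definition Wp :: "real \<Rightarrow> real measure \<Rightarrow> real measure \<Rightarrow> real" where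
  "Wp p \<mu> \<nu> = (INF \<pi> \<in> couplings \<mu> \<nu>. (\<integral>z. \<bar>fst z - snd z\<bar> powr p \<partial>\<pi>)) powr (1 / p)"

definition Winf :: "real measure \<Rightarrow> real measure \<Rightarrow> ereal" where
  "Winf \<mu> \<nu> = (INF \<pi> \<in> couplings \<mu> \<nu>. esssup \<pi> (\<lambda>z. ereal \<bar>fst z - snd z\<bar>))"

end

(*
  By the easy half of Kantorovich-Rubinstein duality, and since W_1 <= W_p and W_1 <= W_inf, a rate
  C/N bounds |sum_{j<=N} H(x_j) - N int H| by 2C for every 2-Lipschitz H. Taking for H signed
  combinations of the primitives of the indicators of the dyadic cells of width h = 2^-(n+1), every
  sum_c g_c D(N, c) with |g_c| <= 2 is bounded by 2C, where D(N, c) is the integral over the cell c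
  of the discrepancy function #{j <= N. x_j <= y} - N y.

  Halasz's Riesz-product proof of Roth's theorem, run in the two variables time N <= 2^n and
  position y, shows that this is impossible. At level k tile the grid by boxes of 2^(k-1) times and
  2^(n+1-k) cells. If no point arriving during the time block of a box lands in its cell block, then
  inside the box the counting part of D is a function of N plus a function of y, so the product Haar
  function of the box only sees -N y and pairs with D to minus the square of a quarter of the box
  area; in every time block at least half of the boxes are of this kind. For m levels spaced m
  apart, the Riesz product Im prod_k (1 + i f_k / sqrt m) of the Haar functions f_k supported on
  these boxes is bounded by 2, its first-order part pairs with D to at most -sqrt m 2^n / 64 and its
  higher-order parts are negligible, which contradicts the bound 2^n 2C for large m.
*)

theory Submission
  imports Defs
begin

section \<open>Lebesgue measure, empirical measures and couplings\<close>

definition prob_on_unit_interval :: "real measure \<Rightarrow> bool" where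
  "prob_on_unit_interval \<mu> \<longleftrightarrow> prob_space \<mu> \<and> sets \<mu> = sets borel \<and> (AE u in \<mu>. u \<in> {0..1})"

lemma sets_lambda1 [simp, measurable_cong]: "sets lambda1 = sets borel"
  by (simp add: lambda1_def)

lemma space_lambda1 [simp]: "space lambda1 = UNIV"
  by (simp add: lambda1_def)

lemma prob_on_unit_interval_lambda1: "prob_on_unit_interval lambda1"
proof -
  have "emeasure lambda1 UNIV = emeasure lborel {0..1::real}"
    unfolding lambda1_def by (simp add: emeasure_density nn_integral_indicator)
  then have "prob_space lambda1"
    by (intro prob_spaceI) simp
  moreover have "AE u in lambda1. u \<in> {0..1}"
    unfolding lambda1_def by (subst AE_density) (auto split: split_indicator)
  ultimately show ?thesis
    by (simp add: prob_on_unit_interval_def)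
qed

lemma integral_lambda1_continuous:
  fixes f :: "real \<Rightarrow> real"
  assumes f: "continuous_on UNIV f"
  shows "integral\<^sup>L lambda1 f = integral {0..1} f"
proof -
  have [measurable]: "f \<in> borel_measurable borel"
    using f by (rule borel_measurable_continuous_onI)
  have lambda1_density: "lambda1 = density lborel (\<lambda>u. ennreal (indicator {0..1} u))"
    unfolding lambda1_def by (intro density_cong) (auto split: split_indicator)
  have "integral\<^sup>L lambda1 f = integral\<^sup>L lborel (\<lambda>u. indicator {0..1} u * f u)"
    unfolding lambda1_density by (subst integral_density) auto
  also have "\<dots> = (LINT u:{0..1}|lborel. f u)"
    by (simp add: set_lebesgue_integral_def)
  also have "\<dots> = integral {0..1} f"
  proof (rule set_borel_integral_eq_integral(2))
    show "set_integrable lborel {0..1} f"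
      unfolding set_integrable_def
      by (rule borel_integrable_compact) (auto intro: continuous_on_subset[OF f])
  qed
  finally show ?thesis .
qed

lemma sets_empirical [simp, measurable_cong]: "sets (empirical x N) = sets borel"
  by (simp add: empirical_def)

lemma prob_on_unit_interval_empirical:
  assumes N: "N \<ge> 1" and x: "\<forall>n\<ge>1. x n \<in> {0..1}"
  shows "prob_on_unit_interval (empirical x N)"
proof -
  have "prob_space (empirical x N)"
    unfolding empirical_def
    by (intro prob_space.prob_space_distr prob_space_uniform_measure) (use N in auto)
  moreover have "\<And>n. Suc 0 \<le> n \<Longrightarrow> 0 \<le> x n \<and> x n \<le> 1"
    using x by auto
  then have "AE u in empirical x N. u \<in> {0..1}"
    unfolding empirical_def
    by (subst AE_distr_iff) (auto intro!: AE_uniform_measureI simp: AE_count_space)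
  ultimately show ?thesis
    by (simp add: prob_on_unit_interval_def)
qed

lemma integral_empirical:
  fixes f :: "real \<Rightarrow> real"
  assumes [measurable]: "f \<in> borel_measurable borel" and N: "N \<ge> 1"
  shows "integral\<^sup>L (empirical x N) f = (\<Sum>j=1..N. f (x j)) / real N"
proof -
  have "uniform_measure (count_space UNIV) {1..N} =
      density (count_space UNIV) (\<lambda>j. ennreal (indicator {1..N} j / real N))"
    unfolding uniform_measure_def using N
    by (intro density_cong)
      (auto simp: divide_ennreal ennreal_of_nat_eq_real_of_nat ennreal_1[symmetric]
        simp del: ennreal_1 split: split_indicator)
  then have "integral\<^sup>L (empirical x N) f =
      integral\<^sup>L (count_space UNIV) (\<lambda>j. (indicator {1..N} j / real N) *\<^sub>R f (x j))"
    unfolding empirical_def by (simp add: integral_distr integral_density)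
  also have "\<dots> = (\<Sum>j\<in>{1..N}. (indicator {1..N} j / real N) *\<^sub>R f (x j))"
    by (subst lebesgue_integral_count_space_finite_support)
      (auto split: split_indicator intro!: sum.mono_neutral_left)
  also have "\<dots> = (\<Sum>j=1..N. f (x j)) / real N"
    by (simp add: sum_divide_distrib)
  finally show ?thesis .
qed

lemma distr_pair_snd:
  assumes "prob_space M" and "prob_space N"
  shows "distr (M \<Otimes>\<^sub>M N) N snd = N"
proof (intro measure_eqI)
  interpret M: prob_space M by fact
  interpret N: prob_space N by fact
  fix A assume A: "A \<in> sets (distr (M \<Otimes>\<^sub>M N) N snd)"
  then have "emeasure (distr (M \<Otimes>\<^sub>M N) N snd) A = emeasure (M \<Otimes>\<^sub>M N) (space M \<times> A)"
    by (auto simp: emeasure_distr space_pair_measure dest: sets.sets_into_space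
        intro!: arg_cong2[where f=emeasure])
  with A show "emeasure (distr (M \<Otimes>\<^sub>M N) N snd) A = emeasure N A"
    by (simp add: N.emeasure_pair_measure_Times M.emeasure_space_1)
qed simp

lemma pair_measure_in_couplings:
  assumes "prob_space \<mu>" "prob_space \<nu>" "sets \<mu> = sets borel" "sets \<nu> = sets borel"
  shows "\<mu> \<Otimes>\<^sub>M \<nu> \<in> couplings \<mu> \<nu>"
proof -
  have "distr (\<mu> \<Otimes>\<^sub>M \<nu>) borel fst = distr (\<mu> \<Otimes>\<^sub>M \<nu>) \<mu> fst"
    "distr (\<mu> \<Otimes>\<^sub>M \<nu>) borel snd = distr (\<mu> \<Otimes>\<^sub>M \<nu>) \<nu> snd"
    using assms by (auto intro!: distr_cong)
  moreover have "distr (\<mu> \<Otimes>\<^sub>M \<nu>) \<mu> fst = \<mu>" "distr (\<mu> \<Otimes>\<^sub>M \<nu>) \<nu> snd = \<nu>"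
    using assms by (simp_all add: prob_space.distr_pair_fst distr_pair_snd)
  ultimately show ?thesis
    using assms unfolding couplings_def by (auto intro!: sets_pair_measure_cong prob_space_pair)
qed

context
  fixes \<pi> \<mu> \<nu>
  assumes coupling: "\<pi> \<in> couplings \<mu> \<nu>"
begin

lemma couplingD:
  "prob_space \<pi>" "sets \<pi> = sets (borel \<Otimes>\<^sub>M borel)"
  "distr \<pi> borel fst = \<mu>" "distr \<pi> borel snd = \<nu>"
  using coupling by (simp_all add: couplings_def)

lemma measurable_coupling_fst_snd: "fst \<in> borel_measurable \<pi>" "snd \<in> borel_measurable \<pi>"
  using measurable_cong_sets[OF couplingD(2) refl] by auto

lemma integral_coupling_fst:
  fixes f :: "real \<Rightarrow> real"
  assumes "f \<in> borel_measurable borel"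
  shows "(\<integral>z. f (fst z) \<partial>\<pi>) = integral\<^sup>L \<mu> f"
  unfolding couplingD(3)[symmetric] using assms measurable_coupling_fst_snd by (subst integral_distr) auto

lemma integral_coupling_snd:
  fixes f :: "real \<Rightarrow> real"
  assumes "f \<in> borel_measurable borel"
  shows "(\<integral>z. f (snd z) \<partial>\<pi>) = integral\<^sup>L \<nu> f"
  unfolding couplingD(4)[symmetric] using assms measurable_coupling_fst_snd by (subst integral_distr) auto

lemma coupling_distance_le_1:
  assumes "prob_on_unit_interval \<mu>" "prob_on_unit_interval \<nu>"
  shows "AE z in \<pi>. \<bar>fst z - snd z\<bar> \<le> 1"
proof -
  have "AE u in distr \<pi> borel fst. u \<in> {0..1}" "AE u in distr \<pi> borel snd. u \<in> {0..1}"
    using assms by (simp_all only: couplingD prob_on_unit_interval_def)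
  then have "AE z in \<pi>. fst z \<in> {0..1}" "AE z in \<pi>. snd z \<in> {0..1}"
    using measurable_coupling_fst_snd by (simp_all add: AE_distr_iff)
  then show ?thesis
    by eventually_elim auto
qed

end

section \<open>The Wasserstein distance \<open>W\<^sub>1\<close>\<close>

lemma powr_ge_tangent:
  fixes u a p :: real
  assumes u: "u \<ge> 0" and a: "a > 0" and p: "p \<ge> 1"
  shows "a powr p + p * a powr (p - 1) * (u - a) \<le> u powr p"
proof (cases "u = 0")
  case True
  have "a powr (p - 1) * a = a powr p"
    using a by (simp add: powr_diff)
  then have "a powr p + p * a powr (p - 1) * (u - a) = (1 - p) * a powr p"
    using True by (simp add: algebra_simps)
  also have "\<dots> \<le> 0"
    using p by (simp add: mult_nonpos_nonneg)
  finally show ?thesis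
    using True by simp
next
  case False
  have "p * a powr (p - 1) * (u - a) \<le> u powr p - a powr p"
  proof (rule convex_on_imp_above_tangent[where A="{0<..}"])
    show "convex_on {0<..} (\<lambda>x. x powr p)"
      by (rule powr_convex[OF p])
    show "((\<lambda>x. x powr p) has_real_derivative p * a powr (p - 1)) (at a within {0<..})"
      using has_real_derivative_powr[OF a] by (rule DERIV_subset) simp
  qed (use a u False in \<open>auto simp: interior_open\<close>)
  then show ?thesis
    by simp
qed

lemma (in prob_space) integral_powr_le:
  fixes g :: "'a \<Rightarrow> real"
  assumes g: "integrable M g" "AE z in M. g z \<ge> 0"
    and g_powr: "integrable M (\<lambda>z. g z powr p)" and p: "p \<ge> 1"
  shows "(integral\<^sup>L M g) powr p \<le> integral\<^sup>L M (\<lambda>z. g z powr p)"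
proof -
  define a where "a = integral\<^sup>L M g"
  have "a \<ge> 0"
    unfolding a_def using g(2) by (rule integral_nonneg_AE)
  show ?thesis
  proof (cases "a = 0")
    case True
    then show ?thesis
      unfolding a_def[symmetric] using g(2) by (simp add: integral_nonneg_AE)
  next
    case False
    with \<open>a \<ge> 0\<close> have a: "a > 0"
      by simp
    have "integral\<^sup>L M (\<lambda>z. a powr p + p * a powr (p - 1) * (g z - a)) \<le> integral\<^sup>L M (\<lambda>z. g z powr p)"
      by (rule integral_mono_AE) (use g g_powr powr_ge_tangent[OF _ a p] in auto)
    moreover have "integral\<^sup>L M (\<lambda>z. a powr p + p * a powr (p - 1) * (g z - a)) = a powr p"
      using g(1) by (simp add: a_def prob_space)
    ultimately show ?thesis
      unfolding a_def by simp
  qed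
qed

context
  fixes \<mu> \<nu> :: "real measure"
  assumes \<mu>: "prob_on_unit_interval \<mu>" and \<nu>: "prob_on_unit_interval \<nu>"
begin

lemma couplings_nonempty: "couplings \<mu> \<nu> \<noteq> {}"
  using \<mu> \<nu> pair_measure_in_couplings[of \<mu> \<nu>] by (auto simp: prob_on_unit_interval_def)

lemma integrable_coupling_distance_powr:
  assumes \<pi>: "\<pi> \<in> couplings \<mu> \<nu>" and p: "p \<ge> 0"
  shows "integrable \<pi> (\<lambda>z. \<bar>fst z - snd z\<bar> powr p)"
proof -
  interpret prob_space \<pi>
    by (rule couplingD(1)[OF \<pi>])
  note [measurable] = measurable_coupling_fst_snd[OF \<pi>]
  show ?thesis
  proof (rule integrable_const_bound[where B=1])
    show "AE z in \<pi>. norm (\<bar>fst z - snd z\<bar> powr p) \<le> 1"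
      using coupling_distance_le_1[OF \<pi> \<mu> \<nu>] by eventually_elim (use p in \<open>auto intro: powr_le1\<close>)
  qed measurable
qed

lemma integrable_coupling_distance:
  "\<pi> \<in> couplings \<mu> \<nu> \<Longrightarrow> integrable \<pi> (\<lambda>z. \<bar>fst z - snd z\<bar>)"
  using integrable_coupling_distance_powr[of \<pi> 1] by simp

lemma Wp_one_eq_INF: "Wp 1 \<mu> \<nu> = (INF \<pi>\<in>couplings \<mu> \<nu>. \<integral>z. \<bar>fst z - snd z\<bar> \<partial>\<pi>)"
proof -
  have "0 \<le> (INF \<pi>\<in>couplings \<mu> \<nu>. \<integral>z. \<bar>fst z - snd z\<bar> \<partial>\<pi>)"
    using couplings_nonempty by (intro cINF_greatest) auto
  then show ?thesis
    unfolding Wp_def by simp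
qed

lemma Wp_one_le_coupling:
  assumes "\<pi> \<in> couplings \<mu> \<nu>"
  shows "Wp 1 \<mu> \<nu> \<le> (\<integral>z. \<bar>fst z - snd z\<bar> \<partial>\<pi>)"
  unfolding Wp_one_eq_INF using assms by (intro cINF_lower bdd_belowI[of _ 0]) auto

lemma le_Wp_one:
  assumes "\<And>\<pi>. \<pi> \<in> couplings \<mu> \<nu> \<Longrightarrow> a \<le> (\<integral>z. \<bar>fst z - snd z\<bar> \<partial>\<pi>)"
  shows "a \<le> Wp 1 \<mu> \<nu>"
  unfolding Wp_one_eq_INF using assms couplings_nonempty by (intro cINF_greatest) auto

lemma Wp_one_le_Wp:
  assumes p: "p \<ge> 1"
  shows "Wp 1 \<mu> \<nu> \<le> Wp p \<mu> \<nu>"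
proof -
  define I where "I = (INF \<pi>\<in>couplings \<mu> \<nu>. \<integral>z. \<bar>fst z - snd z\<bar> powr p \<partial>\<pi>)"
  have W: "0 \<le> Wp 1 \<mu> \<nu>"
    by (rule le_Wp_one) simp
  have "Wp 1 \<mu> \<nu> powr p \<le> I"
    unfolding I_def
  proof (rule cINF_greatest[OF couplings_nonempty])
    fix \<pi> assume \<pi>: "\<pi> \<in> couplings \<mu> \<nu>"
    interpret prob_space \<pi>
      by (rule couplingD(1)[OF \<pi>])
    have "Wp 1 \<mu> \<nu> powr p \<le> (\<integral>z. \<bar>fst z - snd z\<bar> \<partial>\<pi>) powr p"
      using W p Wp_one_le_coupling[OF \<pi>] by (intro powr_mono2) auto
    also have "\<dots> \<le> (\<integral>z. \<bar>fst z - snd z\<bar> powr p \<partial>\<pi>)"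
      using p by (intro integral_powr_le integrable_coupling_distance[OF \<pi>]
          integrable_coupling_distance_powr[OF \<pi>]) auto
    finally show "Wp 1 \<mu> \<nu> powr p \<le> (\<integral>z. \<bar>fst z - snd z\<bar> powr p \<partial>\<pi>)" .
  qed
  then have "(Wp 1 \<mu> \<nu> powr p) powr (1 / p) \<le> I powr (1 / p)"
    using p by (intro powr_mono2) auto
  then show ?thesis
    using W p unfolding Wp_def[of p] I_def by (simp add: powr_powr)
qed

lemma Wp_one_le_Winf: "ereal (Wp 1 \<mu> \<nu>) \<le> Winf \<mu> \<nu>"
  unfolding Winf_def
proof (rule INF_greatest)
  fix \<pi> assume \<pi>: "\<pi> \<in> couplings \<mu> \<nu>"
  interpret prob_space \<pi>
    by (rule couplingD(1)[OF \<pi>])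
  let ?S = "esssup \<pi> (\<lambda>z. ereal \<bar>fst z - snd z\<bar>)"
  have S: "AE z in \<pi>. ereal \<bar>fst z - snd z\<bar> \<le> ?S"
    by (rule esssup_AE)
  have "ereal (\<integral>z. \<bar>fst z - snd z\<bar> \<partial>\<pi>) \<le> ?S"
  proof (cases ?S)
    case (real s)
    have "(\<integral>z. \<bar>fst z - snd z\<bar> \<partial>\<pi>) \<le> (\<integral>z. s \<partial>\<pi>)"
      using S real by (intro integral_mono_AE integrable_coupling_distance[OF \<pi>]) auto
    then show ?thesis
      using real by (simp add: prob_space)
  next
    case MInf
    then show ?thesis
      using S by (simp add: AE_False)
  qed simp
  then show "ereal (Wp 1 \<mu> \<nu>) \<le> ?S"
    using Wp_one_le_coupling[OF \<pi>] by (meson ereal_less_eq(3) order_trans)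
qed

lemma abs_integral_diff_le_Lipschitz_Wp_one:
  fixes H :: "real \<Rightarrow> real"
  assumes [measurable]: "H \<in> borel_measurable borel"
    and Lipschitz: "\<And>u v. \<bar>H u - H v\<bar> \<le> L * \<bar>u - v\<bar>" and L: "L \<ge> 0"
    and bounded: "\<And>u. \<bar>H u\<bar> \<le> B"
  shows "\<bar>integral\<^sup>L \<mu> H - integral\<^sup>L \<nu> H\<bar> \<le> L * Wp 1 \<mu> \<nu>"
proof -
  have coupling_bound: "\<bar>integral\<^sup>L \<mu> H - integral\<^sup>L \<nu> H\<bar> \<le> L * (\<integral>z. \<bar>fst z - snd z\<bar> \<partial>\<pi>)"
    if \<pi>: "\<pi> \<in> couplings \<mu> \<nu>" for \<pi>
  proof -
    interpret prob_space \<pi>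
      by (rule couplingD(1)[OF \<pi>])
    note [measurable] = measurable_coupling_fst_snd[OF \<pi>]
    have H_fst: "integrable \<pi> (\<lambda>z. H (fst z))" and H_snd: "integrable \<pi> (\<lambda>z. H (snd z))"
      using bounded by (auto intro!: integrable_const_bound[where B=B])
    have "\<bar>integral\<^sup>L \<mu> H - integral\<^sup>L \<nu> H\<bar> = \<bar>\<integral>z. H (fst z) - H (snd z) \<partial>\<pi>\<bar>"
      using H_fst H_snd by (simp add: integral_coupling_fst[OF \<pi>] integral_coupling_snd[OF \<pi>])
    also have "\<dots> \<le> (\<integral>z. \<bar>H (fst z) - H (snd z)\<bar> \<partial>\<pi>)"
      by (rule integral_abs_bound)
    also have "\<dots> \<le> (\<integral>z. L * \<bar>fst z - snd z\<bar> \<partial>\<pi>)"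
      using H_fst H_snd integrable_coupling_distance[OF \<pi>] Lipschitz by (intro integral_mono) auto
    finally show ?thesis
      by simp
  qed
  show ?thesis
  proof (cases "L = 0")
    case True
    obtain \<pi> where "\<pi> \<in> couplings \<mu> \<nu>"
      using couplings_nonempty by blast
    then show ?thesis
      using coupling_bound True by fastforce
  next
    case False
    then have "\<bar>integral\<^sup>L \<mu> H - integral\<^sup>L \<nu> H\<bar> / L \<le> Wp 1 \<mu> \<nu>"
      using L coupling_bound by (intro le_Wp_one) (simp add: divide_le_eq mult.commute)
    then show ?thesis
      using False L by (simp add: divide_le_eq mult.commute)
  qed
qed

end

lemma abs_sum_Lipschitz_empirical_le:
  fixes H :: "real \<Rightarrow> real"
  assumes N: "N \<ge> 1" and x: "\<forall>n\<ge>1. x n \<in> {0..1}"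
    and W: "Wp 1 (empirical x N) lambda1 \<le> C / real N"
    and [measurable]: "H \<in> borel_measurable borel"
    and Lipschitz: "\<And>u v. \<bar>H u - H v\<bar> \<le> L * \<bar>u - v\<bar>" and L: "L \<ge> 0"
    and bounded: "\<And>u. \<bar>H u\<bar> \<le> B"
  shows "\<bar>(\<Sum>j=1..N. H (x j)) - real N * integral\<^sup>L lambda1 H\<bar> \<le> L * C"
proof -
  have "\<bar>integral\<^sup>L (empirical x N) H - integral\<^sup>L lambda1 H\<bar> \<le> L * Wp 1 (empirical x N) lambda1"
    using prob_on_unit_interval_empirical[OF N x] prob_on_unit_interval_lambda1 Lipschitz L bounded
    by (intro abs_integral_diff_le_Lipschitz_Wp_one) auto
  also have "\<dots> \<le> L * C / real N"
    using mult_left_mono[OF W L] by simp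
  finally have "\<bar>(\<Sum>j=1..N. H (x j)) / real N - integral\<^sup>L lambda1 H\<bar> \<le> L * C / real N"
    using N by (simp add: integral_empirical)
  moreover have "(\<Sum>j=1..N. H (x j)) - real N * integral\<^sup>L lambda1 H =
      real N * ((\<Sum>j=1..N. H (x j)) / real N - integral\<^sup>L lambda1 H)"
    using N by (simp add: field_simps)
  ultimately show ?thesis
    using N by (simp add: abs_mult pos_le_divide_eq mult.commute)
qed

section \<open>Cell discrepancies\<close>

lemma integral_max_0_diff:
  fixes a :: real
  assumes a: "0 \<le> a" "a \<le> 1"
  shows "integral {0..1} (\<lambda>u. max 0 (u - a)) = (1 - a)^2 / 2"
proof -
  have "((\<lambda>u. u - a) has_integral (1 - a)^2 / 2 - (a - a)^2 / 2) {a..1}"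
  proof (rule fundamental_theorem_of_calculus)
    fix u assume "u \<in> {a..1}"
    have "((\<lambda>u. (u - a)^2 / 2) has_real_derivative (u - a)) (at u within {a..1})"
      by (rule derivative_eq_intros refl | simp)+
    then show "((\<lambda>u. (u - a)^2 / 2) has_vector_derivative (u - a)) (at u within {a..1})"
      by (simp add: has_real_derivative_iff_has_vector_derivative)
  qed (use a in simp)
  then have right: "integral {a..1} (\<lambda>u. u - a) = (1 - a)^2 / 2"
    by (simp add: integral_unique)
  have "integral {0..1} (\<lambda>u. max 0 (u - a)) =
      integral {0..a} (\<lambda>u. max 0 (u - a)) + integral {a..1} (\<lambda>u. max 0 (u - a))"
    using a by (intro Henstock_Kurzweil_Integration.integral_combine[symmetric] integrable_continuous_real
        continuous_intros) auto
  also have "integral {0..a} (\<lambda>u. max 0 (u - a)) = integral {0..a} (\<lambda>u. 0)"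
    by (rule integral_cong) auto
  also have "integral {a..1} (\<lambda>u. max 0 (u - a)) = integral {a..1} (\<lambda>u. u - a)"
    by (rule integral_cong) auto
  finally show ?thesis
    using right by simp
qed

definition cell_ramp :: "real \<Rightarrow> nat \<Rightarrow> real \<Rightarrow> real" where
  "cell_ramp h c u = max 0 (min h (u - real c * h))"

lemma cell_ramp_bounds: "h \<ge> 0 \<Longrightarrow> 0 \<le> cell_ramp h c u \<and> cell_ramp h c u \<le> h"
  unfolding cell_ramp_def by auto

lemma cell_ramp_mono: "u \<le> v \<Longrightarrow> cell_ramp h c u \<le> cell_ramp h c v"
  unfolding cell_ramp_def by (auto simp: max_def min_def)

lemma continuous_on_cell_ramp: "continuous_on UNIV (cell_ramp h c)"
  unfolding cell_ramp_def by (intro continuous_intros)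

lemma sum_cell_ramp: "h \<ge> 0 \<Longrightarrow> (\<Sum>c<K. cell_ramp h c u) = min (real K * h) (max 0 u)"
proof (induction K)
  case (Suc K)
  have "min a (max 0 u) + max 0 (min h (u - a)) = min (a + h) (max 0 u)" if "0 \<le> a" for a
    using that Suc.prems by (auto simp: min_def max_def)
  from this[of "real K * h"] show ?case
    using Suc by (simp add: cell_ramp_def algebra_simps)
qed simp

lemma sum_abs_cell_ramp_diff_le:
  assumes h: "h \<ge> 0"
  shows "(\<Sum>c<K. \<bar>cell_ramp h c u - cell_ramp h c v\<bar>) \<le> \<bar>u - v\<bar>"
proof -
  have *: "(\<Sum>c<K. \<bar>cell_ramp h c u - cell_ramp h c v\<bar>) \<le> v - u" if "u \<le> v" for u v
  proof -
    have "(\<Sum>c<K. \<bar>cell_ramp h c u - cell_ramp h c v\<bar>) = (\<Sum>c<K. cell_ramp h c v - cell_ramp h c u)"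
      using cell_ramp_mono[OF \<open>u \<le> v\<close>] by (intro sum.cong) auto
    also have "\<dots> = min (real K * h) (max 0 v) - min (real K * h) (max 0 u)"
      by (simp add: sum_subtractf sum_cell_ramp[OF h])
    also have "\<dots> \<le> v - u"
      using \<open>u \<le> v\<close> by (simp add: min_def max_def)
    finally show ?thesis .
  qed
  show ?thesis
    using *[of u v] *[of v u] by (cases "u \<le> v") (simp_all add: abs_minus_commute)
qed

lemma integral_lambda1_cell_ramp:
  assumes h: "h > 0" and c: "(real c + 1) * h \<le> 1"
  shows "integral\<^sup>L lambda1 (\<lambda>u. h - cell_ramp h c u) = h * (real c * h + h / 2)"
proof -
  define a b where "a = real c * h" and "b = (real c + 1) * h"
  have ab: "0 \<le> a" "a \<le> 1" "0 \<le> b" "b \<le> 1"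
    using h c by (auto simp: a_def b_def intro: order_trans[OF _ c])
  have max_integrable: "(\<lambda>u. max 0 (u - d)) integrable_on {0..1}" for d :: real
    by (intro integrable_continuous_real continuous_intros)
  have "cell_ramp h c u = max 0 (u - a) - max 0 (u - b)" for u
    using h unfolding cell_ramp_def a_def b_def by (auto simp: algebra_simps)
  then have "integral\<^sup>L lambda1 (\<lambda>u. h - cell_ramp h c u) =
      integral {0..1} (\<lambda>u. h - (max 0 (u - a) - max 0 (u - b)))"
    by (simp add: integral_lambda1_continuous[symmetric] continuous_on_cell_ramp continuous_intros
        del: max.absorb1 max.absorb2 max.absorb3 max.absorb4)
  also have "\<dots> = h - integral {0..1} (\<lambda>u. max 0 (u - a) - max 0 (u - b))"
    using max_integrable by (subst Henstock_Kurzweil_Integration.integral_diff) (auto intro!: integrable_diff)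
  also have "\<dots> = h - (integral {0..1} (\<lambda>u. max 0 (u - a)) - integral {0..1} (\<lambda>u. max 0 (u - b)))"
    using max_integrable by (subst Henstock_Kurzweil_Integration.integral_diff) auto
  also have "\<dots> = h * (real c * h + h / 2)"
    using ab by (simp add: integral_max_0_diff a_def b_def power2_eq_square field_simps)
  finally show ?thesis .
qed

text \<open>\<^term>\<open>cell_discrepancy h x N c\<close> is the integral over the \<open>c\<close>-th cell of the
  discrepancy function \<open>y \<mapsto> #{j \<in> {1..N}. x j \<le> y} - N y\<close>.\<close>

definition cell_discrepancy :: "real \<Rightarrow> (nat \<Rightarrow> real) \<Rightarrow> nat \<Rightarrow> nat \<Rightarrow> real" where
  "cell_discrepancy h x N c = (\<Sum>j=1..N. h - cell_ramp h c (x j)) - real N * (h * (real c * h + h / 2))"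

definition cell_test :: "real \<Rightarrow> nat \<Rightarrow> (nat \<Rightarrow> real) \<Rightarrow> real \<Rightarrow> real" where
  "cell_test h K g u = (\<Sum>c<K. g c * (h - cell_ramp h c u))"

lemma continuous_on_cell_test: "continuous_on UNIV (cell_test h K g)"
  unfolding cell_test_def by (intro continuous_intros continuous_on_cell_ramp)

lemma abs_cell_test_le:
  assumes "h \<ge> 0" and "\<And>c. c < K \<Longrightarrow> \<bar>g c\<bar> \<le> 2"
  shows "\<bar>cell_test h K g u\<bar> \<le> 2 * h * real K"
proof -
  have "\<bar>h - cell_ramp h c u\<bar> \<le> h" for c
    using cell_ramp_bounds[of h c u] assms(1) by auto
  then have "\<bar>cell_test h K g u\<bar> \<le> (\<Sum>c<K. 2 * h)"
    unfolding cell_test_def using assms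
    by (intro order_trans[OF sum_abs] sum_mono) (auto simp: abs_mult intro!: mult_mono)
  then show ?thesis
    by (simp add: mult_ac)
qed

lemma cell_test_Lipschitz:
  assumes "h \<ge> 0" and g: "\<And>c. c < K \<Longrightarrow> \<bar>g c\<bar> \<le> 2"
  shows "\<bar>cell_test h K g u - cell_test h K g v\<bar> \<le> 2 * \<bar>u - v\<bar>"
proof -
  have "\<bar>cell_test h K g u - cell_test h K g v\<bar> = \<bar>\<Sum>c<K. g c * (cell_ramp h c v - cell_ramp h c u)\<bar>"
    unfolding cell_test_def by (simp add: sum_subtractf[symmetric] algebra_simps)
  also have "\<dots> \<le> (\<Sum>c<K. 2 * \<bar>cell_ramp h c u - cell_ramp h c v\<bar>)"
    using g by (intro order_trans[OF sum_abs] sum_mono)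
      (auto simp: abs_mult abs_minus_commute intro!: mult_right_mono)
  also have "\<dots> \<le> 2 * \<bar>u - v\<bar>"
    using sum_abs_cell_ramp_diff_le[where K=K and u=u and v=v] assms(1)
    by (simp add: sum_distrib_left[symmetric])
  finally show ?thesis .
qed

lemma sum_cell_test_minus_integral:
  assumes h: "h > 0" and K: "real K * h = 1"
  shows "(\<Sum>j=1..N. cell_test h K g (x j)) - real N * integral\<^sup>L lambda1 (cell_test h K g) =
    (\<Sum>c<K. g c * cell_discrepancy h x N c)"
proof -
  interpret lambda1: prob_space lambda1
    using prob_on_unit_interval_lambda1 by (simp add: prob_on_unit_interval_def)
  have "integrable lambda1 (\<lambda>u. h - cell_ramp h c u)" for c
    using cell_ramp_bounds[of h c] h borel_measurable_continuous_onI[OF continuous_on_cell_ramp]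
    by (intro lambda1.integrable_const_bound[where B=h]) auto
  moreover have "(real c + 1) * h \<le> 1" if "c < K" for c
    using that h K by (metis Suc_leI mult_right_mono of_nat_Suc of_nat_le_iff add.commute less_imp_le)
  ultimately have "integral\<^sup>L lambda1 (cell_test h K g) = (\<Sum>c<K. g c * (h * (real c * h + h / 2)))"
    unfolding cell_test_def by (simp add: integral_lambda1_cell_ramp h)
  moreover have "(\<Sum>j=1..N. cell_test h K g (x j)) = (\<Sum>c<K. g c * (\<Sum>j=1..N. h - cell_ramp h c (x j)))"
    unfolding cell_test_def by (subst sum.swap) (simp add: sum_distrib_left)
  moreover have "real N * (\<Sum>c<K. g c * (h * (real c * h + h / 2))) =
      (\<Sum>c<K. g c * (real N * (h * (real c * h + h / 2))))"
    by (simp add: sum_distrib_left algebra_simps)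
  ultimately show ?thesis
    unfolding cell_discrepancy_def by (simp add: sum_subtractf[symmetric] right_diff_distrib)
qed

lemma abs_sum_weighted_cell_discrepancy_le:
  assumes N: "N \<ge> 1" and x: "\<forall>n\<ge>1. x n \<in> {0..1}"
    and W: "Wp 1 (empirical x N) lambda1 \<le> C / real N"
    and h: "h > 0" and K: "real K * h = 1" and g: "\<And>c. c < K \<Longrightarrow> \<bar>g c\<bar> \<le> 2"
  shows "\<bar>\<Sum>c<K. g c * cell_discrepancy h x N c\<bar> \<le> 2 * C"
proof -
  have "\<bar>(\<Sum>j=1..N. cell_test h K g (x j)) - real N * integral\<^sup>L lambda1 (cell_test h K g)\<bar> \<le> 2 * C"
    using h g by (intro abs_sum_Lipschitz_empirical_le[OF N x W, where B="2 * h * real K"]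
        borel_measurable_continuous_onI continuous_on_cell_test cell_test_Lipschitz abs_cell_test_le) auto
  then show ?thesis
    unfolding sum_cell_test_minus_integral[OF h K] .
qed

section \<open>Haar functions on the time-position grid\<close>

definition alt_sign :: "nat \<Rightarrow> real" where
  "alt_sign i = (if even i then 1 else -1)"

lemma alt_sign_add_double [simp]: "alt_sign (2 * b + i) = alt_sign i"
  unfolding alt_sign_def by auto

lemma alt_sign_double [simp]: "alt_sign (2 * b) = 1"
  unfolding alt_sign_def by auto

lemma abs_alt_sign [simp]: "\<bar>alt_sign i\<bar> = 1"
  unfolding alt_sign_def by auto

lemma sum_lessThan_mult_blocks:
  fixes A R :: nat
  shows "(\<Sum>i<A * R. f i) = (\<Sum>a<A. \<Sum>r<R. f (a * R + r))"
proof -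
  have "sum f {a * R..<a * R + R} = (\<Sum>r<R. f (a * R + r))" for a
    using sum.shift_bounds_nat_ivl[of f 0 "a * R" R] by (simp add: atLeast0LessThan add.commute)
  then show ?thesis
    using sum.nat_group[of f R A] by simp
qed

lemma sum_lessThan_double:
  fixes q :: nat
  shows "(\<Sum>r<2 * q. f r) = (\<Sum>r<q. f r) + (\<Sum>r<q. f (q + r))"
  using sum_lessThan_mult_blocks[of f 2 q] by (simp add: numeral_2_eq_2)

lemma sum_alt_sign_div:
  fixes q :: nat
  assumes "q > 0"
  shows "(\<Sum>r<2 * q. alt_sign (r div q)) = 0"
proof -
  have "(\<Sum>r<2 * q. alt_sign (r div q)) = (\<Sum>r<q. 1) + (\<Sum>r<q. -1)"
    unfolding sum_lessThan_double using assms
    by (intro arg_cong2[where f="(+)"] sum.cong) (auto simp: alt_sign_def)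
  then show ?thesis
    by simp
qed

lemma sum_alt_sign_div_mult:
  fixes q :: nat
  assumes "q > 0"
  shows "(\<Sum>r<2 * q. alt_sign (r div q) * real r) = - (real q * real q)"
proof -
  have "(\<Sum>r<2 * q. alt_sign (r div q) * real r) = (\<Sum>r<q. real r) + (\<Sum>r<q. - (real q + real r))"
    unfolding sum_lessThan_double using assms
    by (intro arg_cong2[where f="(+)"] sum.cong) (auto simp: alt_sign_def)
  then show ?thesis
    by (simp add: sum_subtractf)
qed

text \<open>\<^term>\<open>haar_ramp h q a u\<close> pairs the indicator of \<open>(-\<infinity>, u]\<close> with the Haar function
  of the \<open>a\<close>-th block of \<open>2 q\<close> cells.\<close>

definition haar_ramp :: "real \<Rightarrow> nat \<Rightarrow> nat \<Rightarrow> real \<Rightarrow> real" where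
  "haar_ramp h q a u = (\<Sum>r<2 * q. alt_sign (r div q) * cell_ramp h (a * (2 * q) + r) u)"

lemma haar_ramp_outside_block:
  assumes q: "q > 0" and h: "h > 0"
    and u: "u \<le> real (a * (2 * q)) * h \<or> real ((a + 1) * (2 * q)) * h \<le> u"
  shows "haar_ramp h q a u = 0"
  using u
proof
  assume u: "u \<le> real (a * (2 * q)) * h"
  have "cell_ramp h (a * (2 * q) + r) u = 0" for r
  proof -
    have "real (a * (2 * q)) * h \<le> real (a * (2 * q) + r) * h"
      using h by (intro mult_right_mono) auto
    then have "u - real (a * (2 * q) + r) * h \<le> 0"
      using u by linarith
    then show ?thesis
      using h unfolding cell_ramp_def by simp
  qed
  then show ?thesis
    by (simp add: haar_ramp_def)
next
  assume u: "real ((a + 1) * (2 * q)) * h \<le> u"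
  have "cell_ramp h (a * (2 * q) + r) u = h" if "r < 2 * q" for r
  proof -
    have "(real (a * (2 * q) + r) + 1) * h \<le> real ((a + 1) * (2 * q)) * h"
      using that h by (intro mult_right_mono) auto
    then show ?thesis
      using u h unfolding cell_ramp_def by (simp add: algebra_simps)
  qed
  then have "haar_ramp h q a u = (\<Sum>r<2 * q. alt_sign (r div q)) * h"
    unfolding haar_ramp_def sum_distrib_right by (intro sum.cong) auto
  then show ?thesis
    using sum_alt_sign_div[OF q] by simp
qed

lemma sum_alt_sign_cell_discrepancy:
  assumes q: "q > 0"
  shows "(\<Sum>r<2 * q. alt_sign (r div q) * cell_discrepancy h x N (a * (2 * q) + r)) =
    real N * (h * h * (real q * real q)) - (\<Sum>j=1..N. haar_ramp h q a (x j))"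
proof -
  have "(\<Sum>r<2 * q. alt_sign (r div q) * (\<Sum>j=1..N. h - cell_ramp h (a * (2 * q) + r) (x j))) =
      (\<Sum>j=1..N. \<Sum>r<2 * q. alt_sign (r div q) * h - alt_sign (r div q) * cell_ramp h (a * (2 * q) + r) (x j))"
    by (subst sum.swap) (simp add: sum_distrib_left right_diff_distrib)
  also have "\<dots> = (\<Sum>j=1..N. h * (\<Sum>r<2 * q. alt_sign (r div q)) - haar_ramp h q a (x j))"
    by (simp add: haar_ramp_def sum_subtractf sum_distrib_left mult.commute)
  also have "\<dots> = - (\<Sum>j=1..N. haar_ramp h q a (x j))"
    using sum_alt_sign_div[OF q] by (simp add: sum_negf)
  finally have ramps: "(\<Sum>r<2 * q. alt_sign (r div q) * (\<Sum>j=1..N. h - cell_ramp h (a * (2 * q) + r) (x j))) =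
      - (\<Sum>j=1..N. haar_ramp h q a (x j))" .
  have "(\<Sum>r<2 * q. alt_sign (r div q) * (real N * (h * (real (a * (2 * q) + r) * h + h / 2)))) =
      real N * h * h * (real (a * (2 * q)) * (\<Sum>r<2 * q. alt_sign (r div q)) +
        (\<Sum>r<2 * q. alt_sign (r div q) * real r)) + real N * h * (h / 2) * (\<Sum>r<2 * q. alt_sign (r div q))"
    by (simp add: sum_distrib_left sum.distrib algebra_simps)
  also have "\<dots> = - real N * (h * h * (real q * real q))"
    using sum_alt_sign_div[OF q] sum_alt_sign_div_mult[OF q] by simp
  finally have linear: "(\<Sum>r<2 * q. alt_sign (r div q) * (real N * (h * (real (a * (2 * q) + r) * h + h / 2)))) =
      - real N * (h * h * (real q * real q))" .
  have "(\<Sum>r<2 * q. alt_sign (r div q) * cell_discrepancy h x N (a * (2 * q) + r)) =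
      (\<Sum>r<2 * q. alt_sign (r div q) * (\<Sum>j=1..N. h - cell_ramp h (a * (2 * q) + r) (x j))) -
      (\<Sum>r<2 * q. alt_sign (r div q) * (real N * (h * (real (a * (2 * q) + r) * h + h / 2))))"
    unfolding cell_discrepancy_def by (simp only: right_diff_distrib sum_subtractf)
  then show ?thesis
    using ramps linear by simp
qed

text \<open>On a box of \<open>2 q\<close> consecutive cells and \<open>2 p\<close> consecutive times containing no point,
  the counting part of the discrepancy cancels against the Haar signs and only the linear part
  \<open>- N y\<close> contributes.\<close>

lemma sum_empty_box_cell_discrepancy:
  fixes q p a b :: nat
  assumes q: "q > 0" and p: "p > 0" and h: "h > 0"
    and empty: "\<And>j. b * (2 * p) < j \<Longrightarrow> j \<le> b * (2 * p) + 2 * p \<Longrightarrow>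
        x j \<le> real (a * (2 * q)) * h \<or> real ((a + 1) * (2 * q)) * h \<le> x j"
  shows "(\<Sum>s<2 * p. \<Sum>r<2 * q. alt_sign (r div q) * alt_sign (s div p) *
      cell_discrepancy h x (b * (2 * p) + s + 1) (a * (2 * q) + r)) = - ((h * real q * real p)^2)"
proof -
  define R where "R = (\<Sum>j=1..b * (2 * p). haar_ramp h q a (x j))"
  have later_ramps: "(\<Sum>j=1..b * (2 * p) + s + 1. haar_ramp h q a (x j)) = R" if "s < 2 * p" for s
  proof -
    have "(\<Sum>j=1..b * (2 * p) + (s + 1). haar_ramp h q a (x j)) =
        R + (\<Sum>j=b * (2 * p) + 1..b * (2 * p) + (s + 1). haar_ramp h q a (x j))"
      unfolding R_def by (rule sum.ub_add_nat) simp
    also have "(\<Sum>j=b * (2 * p) + 1..b * (2 * p) + (s + 1). haar_ramp h q a (x j)) = 0"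
      using that by (intro sum.neutral ballI haar_ramp_outside_block[OF q h] empty) auto
    finally show ?thesis
      by (simp add: add.assoc)
  qed
  have "(\<Sum>s<2 * p. \<Sum>r<2 * q. alt_sign (r div q) * alt_sign (s div p) *
        cell_discrepancy h x (b * (2 * p) + s + 1) (a * (2 * q) + r)) =
      (\<Sum>s<2 * p. alt_sign (s div p) * (\<Sum>r<2 * q. alt_sign (r div q) *
        cell_discrepancy h x (b * (2 * p) + s + 1) (a * (2 * q) + r)))"
    by (simp add: sum_distrib_left mult_ac)
  also have "\<dots> = (\<Sum>s<2 * p. alt_sign (s div p) *
        (real (b * (2 * p) + s + 1) * (h * h * (real q * real q)) - R))"
  proof (intro sum.cong refl)
    fix s assume "s \<in> {..<2 * p}"
    then show "alt_sign (s div p) * (\<Sum>r<2 * q. alt_sign (r div q) *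
          cell_discrepancy h x (b * (2 * p) + s + 1) (a * (2 * q) + r)) =
        alt_sign (s div p) * (real (b * (2 * p) + s + 1) * (h * h * (real q * real q)) - R)"
      unfolding sum_alt_sign_cell_discrepancy[OF q] using later_ramps by simp
  qed
  also have "\<dots> = (real (b * (2 * p) + 1) * (h * h * (real q * real q)) - R) * (\<Sum>s<2 * p. alt_sign (s div p)) +
      (h * h * (real q * real q)) * (\<Sum>s<2 * p. alt_sign (s div p) * real s)"
    by (simp add: sum_distrib_left sum_distrib_right flip: sum.distrib) (simp add: algebra_simps)
  also have "\<dots> = - ((h * real q * real p)^2)"
    using sum_alt_sign_div[OF p] sum_alt_sign_div_mult[OF p] by (simp add: power2_eq_square)
  finally show ?thesis .
qed

lemma sum_grid_cell_discrepancy: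
  fixes q p A B :: nat and \<kappa> :: "nat \<Rightarrow> nat \<Rightarrow> real"
  assumes q: "q > 0" and p: "p > 0" and h: "h > 0"
    and empty: "\<And>a b j. a < A \<Longrightarrow> b < B \<Longrightarrow> \<kappa> a b \<noteq> 0 \<Longrightarrow> b * (2 * p) < j \<Longrightarrow>
        j \<le> b * (2 * p) + 2 * p \<Longrightarrow> x j \<le> real (a * (2 * q)) * h \<or> real ((a + 1) * (2 * q)) * h \<le> x j"
  shows "(\<Sum>t<B * (2 * p). \<Sum>c<A * (2 * q). \<kappa> (c div (2 * q)) (t div (2 * p)) *
      alt_sign (c div q) * alt_sign (t div p) * cell_discrepancy h x (t + 1) c) =
    - ((h * real q * real p)^2) * (\<Sum>a<A. \<Sum>b<B. \<kappa> a b)"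
proof -
  define D where "D = - ((h * real q * real p)^2)"
  define F where "F a b = (\<Sum>s<2 * p. \<Sum>r<2 * q. alt_sign (r div q) * alt_sign (s div p) *
    cell_discrepancy h x (b * (2 * p) + s + 1) (a * (2 * q) + r))" for a b
  have div_block: "(a * (2 * d) + r) div d = 2 * a + r div d" if "d > 0" for a r d :: nat
    using that div_mult_self1[of d r "2 * a"] by (simp add: algebra_simps)
  have div_block_double: "(a * (2 * d) + r) div (2 * d) = a" if "r < 2 * d" for a r d :: nat
    using that by simp
  have "(\<Sum>t<B * (2 * p). \<Sum>c<A * (2 * q). \<kappa> (c div (2 * q)) (t div (2 * p)) *
      alt_sign (c div q) * alt_sign (t div p) * cell_discrepancy h x (t + 1) c) =
    (\<Sum>b<B. \<Sum>s<2 * p. \<Sum>a<A. \<Sum>r<2 * q. \<kappa> ((a * (2 * q) + r) div (2 * q)) ((b * (2 * p) + s) div (2 * p)) *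
      alt_sign ((a * (2 * q) + r) div q) * alt_sign ((b * (2 * p) + s) div p) *
      cell_discrepancy h x (b * (2 * p) + s + 1) (a * (2 * q) + r))"
    by (simp only: sum_lessThan_mult_blocks)
  also have "\<dots> = (\<Sum>b<B. \<Sum>s<2 * p. \<Sum>a<A. \<Sum>r<2 * q. \<kappa> a b * (alt_sign (r div q) * alt_sign (s div p) *
      cell_discrepancy h x (b * (2 * p) + s + 1) (a * (2 * q) + r)))"
    using q p by (intro sum.cong refl)
      (simp add: div_block div_block_double del: div_mult_self1 div_mult_self2 div_mult_self3 div_mult_self4)
  also have "\<dots> = (\<Sum>b<B. \<Sum>a<A. \<kappa> a b * F a b)"
    unfolding F_def by (rule sum.cong[OF refl]) (subst sum.swap, simp add: sum_distrib_left)
  also have "\<dots> = (\<Sum>b<B. \<Sum>a<A. \<kappa> a b * D)"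
  proof (intro sum.cong refl)
    fix a b assume "a \<in> {..<A}" and "b \<in> {..<B}"
    then have "F a b = D" if "\<kappa> a b \<noteq> 0"
      unfolding F_def D_def using that
      by (intro sum_empty_box_cell_discrepancy[OF q p h] empty) auto
    then show "\<kappa> a b * F a b = \<kappa> a b * D"
      by (cases "\<kappa> a b = 0") auto
  qed
  also have "\<dots> = D * (\<Sum>a<A. \<Sum>b<B. \<kappa> a b)"
    by (subst sum.swap) (simp add: sum_distrib_left sum_distrib_right mult.commute)
  finally show ?thesis
    unfolding D_def .
qed

text \<open>The Haar system on the grid of times \<open>t < 2^n\<close> (standing for \<open>N = t + 1\<close>) and cells
  \<open>c < 2^(n+1)\<close> of width \<open>h\<close>: at level \<open>k\<close> the grid is tiled by boxes of \<open>2^(k-1)\<close> times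
  and \<open>2^(n+1-k)\<close> cells, and a box is empty if none of the points \<open>x j\<close> added during its
  time block lies in the interior of its cell block.\<close>

definition empty_box :: "nat \<Rightarrow> real \<Rightarrow> (nat \<Rightarrow> real) \<Rightarrow> nat \<Rightarrow> nat \<Rightarrow> nat \<Rightarrow> bool" where
  "empty_box n h x k a b \<longleftrightarrow> (\<forall>j. b * 2^(k-1) < j \<and> j \<le> b * 2^(k-1) + 2^(k-1) \<longrightarrow>
      x j \<le> real (a * 2^(n+1-k)) * h \<or> x j \<ge> real ((a+1) * 2^(n+1-k)) * h)"

definition haar_test :: "nat \<Rightarrow> real \<Rightarrow> (nat \<Rightarrow> real) \<Rightarrow> nat \<Rightarrow> nat \<Rightarrow> nat \<Rightarrow> real" where
  "haar_test n h x k t c = (if empty_box n h x k (c div 2^(n+1-k)) (t div 2^(k-1))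
      then alt_sign (c div 2^(n-k)) * alt_sign (t div 2^(k-2)) else 0)"

lemma abs_haar_test_le_1: "\<bar>haar_test n h x k t c\<bar> \<le> 1"
  unfolding haar_test_def by (auto simp: abs_mult)

lemma two_power_split: "a = b + d \<Longrightarrow> (2::nat)^a = 2^b * 2^d"
  by (simp add: power_add)

lemma div_two_power_round:
  fixes c :: nat
  assumes "r \<le> i"
  shows "(c div 2^r * 2^r) div 2^i = c div 2^i"
proof -
  have "(2::nat)^i = 2^r * 2^(i-r)"
    using assms by (intro two_power_split) simp
  then show ?thesis
    by (simp add: div_mult2_eq)
qed

lemma alt_sign_div_two_power_round:
  fixes c :: nat
  shows "alt_sign ((c div 2^r * 2^r) div 2^i) = (if i < r then 1 else alt_sign (c div 2^i))"
proof (cases "i < r")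
  case True
  then have "(2::nat)^r = 2^i * 2^(r-i)" "even ((2::nat)^(r-i))"
    by (simp_all add: two_power_split)
  then show ?thesis
    using True unfolding alt_sign_def by simp
qed (simp add: div_two_power_round)

text \<open>Between the coarsest time level \<open>k\<close> and the finest cell level \<open>K\<close> of a set of levels,
  only the level-\<open>K\<close> factor changes sign inside a block of \<open>2^(n+1-K)\<close> cells and only the
  level-\<open>k\<close> factor inside a block of \<open>2^(k-1)\<close> times; every factor is otherwise determined
  by the corner of the block.\<close>

lemma haar_test_round:
  assumes k: "2 \<le> k" "k \<le> k'" and K: "k' \<le> K" "K \<le> n"
  shows "haar_test n h x k' t c =
    haar_test n h x k' (t div 2^(k-1) * 2^(k-1)) (c div 2^(n+1-K) * 2^(n+1-K)) *
    (if k' = K then alt_sign (c div 2^(n-K)) else 1) * (if k' = k then alt_sign (t div 2^(k-2)) else 1)"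
proof -
  have cell_block: "(c div 2^(n+1-K) * 2^(n+1-K)) div 2^(n+1-k') = c div 2^(n+1-k')"
    using K by (intro div_two_power_round) simp
  have time_block: "(t div 2^(k-1) * 2^(k-1)) div 2^(k'-1) = t div 2^(k'-1)"
    using k by (intro div_two_power_round) simp
  have "n - k' < n + 1 - K \<longleftrightarrow> k' = K" "k' - 2 < k - 1 \<longleftrightarrow> k' = k"
    using k K by auto
  then have cell_sign: "alt_sign ((c div 2^(n+1-K) * 2^(n+1-K)) div 2^(n-k')) =
        (if k' = K then 1 else alt_sign (c div 2^(n-k')))"
    and time_sign: "alt_sign ((t div 2^(k-1) * 2^(k-1)) div 2^(k'-2)) =
        (if k' = k then 1 else alt_sign (t div 2^(k'-2)))"
    by (simp_all only: alt_sign_div_two_power_round)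
  show ?thesis
    unfolding haar_test_def cell_block time_block cell_sign time_sign by (auto simp: alt_sign_def)
qed

lemma prod_haar_test_round:
  assumes S: "finite S" "S \<noteq> {}" "\<And>k. k \<in> S \<Longrightarrow> 2 \<le> k \<and> k \<le> n"
  shows "(\<Prod>k\<in>S. haar_test n h x k t c) =
    (\<Prod>k\<in>S. haar_test n h x k (t div 2^(Min S - 1) * 2^(Min S - 1)) (c div 2^(n+1-Max S) * 2^(n+1-Max S))) *
    alt_sign (c div 2^(n - Max S)) * alt_sign (t div 2^(Min S - 2))"
proof -
  let ?k = "Min S" and ?K = "Max S"
  let ?round = "\<lambda>k. haar_test n h x k (t div 2^(?k-1) * 2^(?k-1)) (c div 2^(n+1-?K) * 2^(n+1-?K))"
  have "?k \<in> S" "?K \<in> S"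
    using S by auto
  then have "(\<Prod>k\<in>S. haar_test n h x k t c) = (\<Prod>k\<in>S. ?round k *
      (if k = ?K then alt_sign (c div 2^(n-?K)) else 1) * (if k = ?k then alt_sign (t div 2^(?k-2)) else 1))"
    using S by (intro prod.cong refl haar_test_round) auto
  also have "\<dots> = (\<Prod>k\<in>S. ?round k) * alt_sign (c div 2^(n - ?K)) * alt_sign (t div 2^(?k - 2))"
    using S \<open>?k \<in> S\<close> \<open>?K \<in> S\<close> by (simp add: prod.distrib prod.delta)
  finally show ?thesis .
qed

lemma empty_box_sub_block:
  assumes k: "2 \<le> k" "k \<le> K" "K \<le> n" and h: "h > 0"
    and empty: "empty_box n h x k (a div 2^(K-k)) b"
    and j: "b * 2^(k-1) < j" "j \<le> b * 2^(k-1) + 2^(k-1)"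
  shows "x j \<le> real (a * 2^(n+1-K)) * h \<or> x j \<ge> real ((a+1) * 2^(n+1-K)) * h"
proof -
  define e :: nat where "e = 2^(K-k)"
  define R :: nat where "R = 2^(n+1-K)"
  have "e > 0"
    unfolding e_def by simp
  have block: "(2::nat)^(n+1-k) = R * e"
    unfolding R_def e_def using k by (intro two_power_split) simp
  have "a div e * e \<le> a"
    by (rule div_times_less_eq_dividend)
  then have "a div e * 2^(n+1-k) \<le> a * R"
    unfolding block using mult_le_mono1[of "a div e * e" a R] by (simp add: mult_ac)
  then have "real (a div e * 2^(n+1-k)) \<le> real (a * R)"
    by (simp only: of_nat_le_iff)
  then have lower: "real (a div e * 2^(n+1-k)) * h \<le> real (a * R) * h"
    using h by (intro mult_right_mono) auto
  have "a + 1 \<le> a div e * e + e"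
    using \<open>e > 0\<close> div_mult_mod_eq[of a e] mod_less_divisor[of e a] by linarith
  then have "(a + 1) * R \<le> (a div e + 1) * 2^(n+1-k)"
    unfolding block using mult_le_mono1[of "a + 1" "a div e * e + e" R] by (simp add: algebra_simps)
  then have "real ((a+1) * R) \<le> real ((a div e + 1) * 2^(n+1-k))"
    by (simp only: of_nat_le_iff)
  then have upper: "real ((a+1) * R) * h \<le> real ((a div e + 1) * 2^(n+1-k)) * h"
    using h by (intro mult_right_mono) auto
  have "x j \<le> real (a div e * 2^(n+1-k)) * h \<or> x j \<ge> real ((a div e + 1) * 2^(n+1-k)) * h"
    using empty j unfolding empty_box_def e_def by blast
  then show ?thesis
    using lower upper unfolding R_def by linarith
qed

lemma empty_box_if_haar_test_nonzero:
  assumes "k \<le> K" "K \<le> n" and "haar_test n h x k (b * 2^(k-1)) (a * 2^(n+1-K)) \<noteq> 0"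
  shows "empty_box n h x k (a div 2^(K-k)) b"
proof -
  have "(2::nat)^(n+1-k) = 2^(n+1-K) * 2^(K-k)"
    using assms by (intro two_power_split) simp
  then have "(a * 2^(n+1-K)) div 2^(n+1-k) = a div 2^(K-k)"
    by (simp add: div_mult2_eq)
  then show ?thesis
    using assms(3) unfolding haar_test_def by (auto split: if_splits)
qed

lemma sum_prod_haar_test_cell_discrepancy:
  assumes S: "finite S" "S \<noteq> {}" "\<And>k. k \<in> S \<Longrightarrow> 2 \<le> k \<and> k \<le> n" and h: "h > 0"
  shows "(\<Sum>t<2^n. \<Sum>c<2^(n+1). (\<Prod>k\<in>S. haar_test n h x k t c) * cell_discrepancy h x (t+1) c) =
    - ((h * real (2^(n - Max S)) * real (2^(Min S - 2)))^2) *
      (\<Sum>a<2^(Max S). \<Sum>b<2^(n+1-Min S). \<Prod>k\<in>S. haar_test n h x k (b * 2^(Min S - 1)) (a * 2^(n+1-Max S)))"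
proof -
  define k K where "k = Min S" and "K = Max S"
  have "k \<in> S" "K \<in> S" "k \<le> K"
    using S unfolding k_def K_def by auto
  then have k: "2 \<le> k" and K: "K \<le> n"
    using S(3) by auto
  define q p :: nat where "q = 2^(n-K)" and "p = 2^(k-2)"
  have "q > 0" "p > 0"
    unfolding q_def p_def by auto
  have "n + 1 - K = Suc (n - K)" "k - 1 = Suc (k - 2)"
    using k K by simp_all
  then have q_block: "2 * q = 2^(n+1-K)" and p_block: "2 * p = 2^(k-1)"
    unfolding q_def p_def by simp_all
  have times: "(2::nat)^n = 2^(n+1-k) * (2 * p)"
    unfolding p_block using k K \<open>k \<le> K\<close> by (intro two_power_split) simp
  have cells: "(2::nat)^(n+1) = 2^K * (2 * q)"
    unfolding q_block using K by (intro two_power_split) simp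
  define \<kappa> where "\<kappa> a b = (\<Prod>k'\<in>S. haar_test n h x k' (b * 2^(k-1)) (a * 2^(n+1-K)))" for a b
  have "(\<Sum>t<2^n. \<Sum>c<2^(n+1). (\<Prod>k\<in>S. haar_test n h x k t c) * cell_discrepancy h x (t+1) c) =
      (\<Sum>t<2^(n+1-k) * (2 * p). \<Sum>c<2^K * (2 * q). \<kappa> (c div (2 * q)) (t div (2 * p)) *
        alt_sign (c div q) * alt_sign (t div p) * cell_discrepancy h x (t+1) c)"
    unfolding times[symmetric] cells[symmetric]
  proof (intro sum.cong refl)
    fix t c
    have "(\<Prod>k\<in>S. haar_test n h x k t c) =
        (\<Prod>k'\<in>S. haar_test n h x k' (t div 2^(k-1) * 2^(k-1)) (c div 2^(n+1-K) * 2^(n+1-K))) *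
        alt_sign (c div 2^(n-K)) * alt_sign (t div 2^(k-2))"
      using prod_haar_test_round[OF S] unfolding k_def K_def .
    then show "(\<Prod>k\<in>S. haar_test n h x k t c) * cell_discrepancy h x (t+1) c =
        \<kappa> (c div (2 * q)) (t div (2 * p)) * alt_sign (c div q) * alt_sign (t div p) * cell_discrepancy h x (t+1) c"
      unfolding \<kappa>_def q_block p_block unfolding q_def p_def by simp
  qed
  also have "\<dots> = - ((h * real q * real p)^2) * (\<Sum>a<2^K. \<Sum>b<2^(n+1-k). \<kappa> a b)"
  proof (rule sum_grid_cell_discrepancy[OF \<open>q > 0\<close> \<open>p > 0\<close> h])
    fix a b j assume "\<kappa> a b \<noteq> 0" and j: "b * (2 * p) < j" "j \<le> b * (2 * p) + 2 * p"
    then have "haar_test n h x k (b * 2^(k-1)) (a * 2^(n+1-K)) \<noteq> 0"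
      using \<open>k \<in> S\<close> S(1) unfolding \<kappa>_def by (auto simp: prod_zero_iff)
    then have "empty_box n h x k (a div 2^(K-k)) b"
      by (rule empty_box_if_haar_test_nonzero[OF \<open>k \<le> K\<close> K])
    then show "x j \<le> real (a * (2 * q)) * h \<or> real ((a + 1) * (2 * q)) * h \<le> x j"
      unfolding q_block using empty_box_sub_block[OF k \<open>k \<le> K\<close> K h] j p_block by auto
  qed
  finally show ?thesis
    unfolding q_def p_def \<kappa>_def k_def K_def .
qed

text \<open>Distinct nonempty boxes of one time block contain distinct points of that block.\<close>

lemma card_nonempty_boxes_le:
  assumes h: "h > 0"
  shows "card {a. a < 2^k \<and> \<not> empty_box n h x k a b} \<le> 2^(k-1)"
proof -
  define w where "w = real (2^(n+1-k)) * h"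
  have "w > 0"
    unfolding w_def using h by simp
  let ?A = "{a. a < 2^k \<and> \<not> empty_box n h x k a b}"
  let ?J = "{b * 2^(k-1)<..b * 2^(k-1) + 2^(k-1)}"
  have point: "\<forall>a\<in>?A. \<exists>j. j \<in> ?J \<and> real a * w < x j \<and> x j < real (a + 1) * w"
    unfolding empty_box_def w_def by (auto simp: not_le algebra_simps)
  obtain f where f: "\<forall>a\<in>?A. f a \<in> ?J \<and> real a * w < x (f a) \<and> x (f a) < real (a + 1) * w"
    using bchoice[OF point] by blast
  have "inj_on f ?A"
  proof (rule inj_onI)
    fix a a' assume a: "a \<in> ?A" and a': "a' \<in> ?A" and "f a = f a'"
    have "real a * w < x (f a)" "x (f a) < real (a + 1) * w"
      "real a' * w < x (f a')" "x (f a') < real (a' + 1) * w"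
      using f a a' by blast+
    then have "real a * w < real (a' + 1) * w" "real a' * w < real (a + 1) * w"
      using \<open>f a = f a'\<close> by auto
    then show "a = a'"
      using \<open>w > 0\<close> by (simp add: mult_less_cancel_right)
  qed
  then have "card ?A \<le> card ?J"
    by (rule card_inj_on_le) (use f in blast)+
  then show ?thesis
    by simp
qed

lemma count_empty_boxes_in_column_ge:
  assumes h: "h > 0" and k: "k \<ge> 1"
  shows "(\<Sum>a<2^k. if empty_box n h x k a b then 1 else 0::real) \<ge> 2^(k-1)"
proof -
  let ?E = "{a. a < (2::nat)^k \<and> empty_box n h x k a b}"
  let ?N = "{a. a < (2::nat)^k \<and> \<not> empty_box n h x k a b}"
  have "card ?E + card ?N = card (?E \<union> ?N)"
    by (intro card_Un_disjoint[symmetric]) auto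
  also have "?E \<union> ?N = {..<2^k}"
    by auto
  finally have "card ?E + card ?N = 2^k"
    by simp
  moreover have "(2::nat)^k = 2^(k-1) + 2^(k-1)"
    using k by (metis Suc_diff_le diff_Suc_1 mult_2 power_Suc)
  ultimately have "card ?E \<ge> 2^(k-1)"
    using card_nonempty_boxes_le[OF h, of k n x b] by linarith
  then have "real (2^(k-1)) \<le> real (card ?E)"
    by (simp only: of_nat_le_iff)
  moreover have "(\<Sum>a<2^k. if empty_box n h x k a b then 1 else 0::real) = (\<Sum>a\<in>{a\<in>{..<2^k}. empty_box n h x k a b}. 1)"
    by (rule sum.inter_filter[symmetric]) simp
  moreover have "{a\<in>{..<(2::nat)^k}. empty_box n h x k a b} = ?E"
    by auto
  ultimately show ?thesis
    by simp
qed

lemma count_empty_boxes_ge: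
  assumes h: "h > 0" and k: "2 \<le> k" "k \<le> n"
  shows "(\<Sum>a<2^k. \<Sum>b<2^(n+1-k). if empty_box n h x k a b then 1 else 0::real) \<ge> 2^n"
proof -
  have "(\<Sum>b<(2::nat)^(n+1-k). 2^(k-1)) \<le> (\<Sum>b<2^(n+1-k). \<Sum>a<2^k. if empty_box n h x k a b then 1 else 0::real)"
    using k by (intro sum_mono count_empty_boxes_in_column_ge[OF h]) simp
  also have "\<dots> = (\<Sum>a<2^k. \<Sum>b<2^(n+1-k). if empty_box n h x k a b then 1 else 0::real)"
    by (rule sum.swap)
  moreover have "(2::nat)^n = 2^(n+1-k) * 2^(k-1)"
    using k by (intro two_power_split) simp
  then have "(\<Sum>b<(2::nat)^(n+1-k). (2::real)^(k-1)) = 2^n"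
    by (metis of_nat_mult of_nat_numeral of_nat_power sum_constant card_lessThan mult_of_nat_commute)
  ultimately show ?thesis
    by simp
qed

lemma sum_haar_test_cell_discrepancy_le:
  assumes k: "2 \<le> k" "k \<le> n"
  shows "(\<Sum>t<2^n. \<Sum>c<2^(n+1). haar_test n (1/2^(n+1)) x k t c * cell_discrepancy (1/2^(n+1)) x (t+1) c)
    \<le> - (2^n / 64)"
proof -
  define h :: real where "h = 1/2^(n+1)"
  have "h > 0"
    unfolding h_def by simp
  have height: "h * real (2^(n - k)) * real (2^(k - 2)) = 1/8"
  proof -
    have "n + 1 = 3 + (n - k) + (k - 2)"
      using k by simp
    then have "(2::real)^(n+1) = 2^3 * 2^(n-k) * 2^(k-2)"
      by (simp only: power_add)
    then show ?thesis
      unfolding h_def by simp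
  qed
  have corner: "haar_test n h x k (b * 2^(k-1)) (a * 2^(n+1-k)) = (if empty_box n h x k a b then 1 else 0)"
    for a b
  proof -
    have "n + 1 - k = Suc (n - k)" "k - 1 = Suc (k - 2)"
      using k by simp_all
    then have "(a * 2^(n+1-k)) div 2^(n-k) = 2 * a" "(b * 2^(k-1)) div 2^(k-2) = 2 * b"
      by simp_all
    then show ?thesis
      unfolding haar_test_def by simp
  qed
  have "(\<Sum>t<2^n. \<Sum>c<2^(n+1). haar_test n h x k t c * cell_discrepancy h x (t+1) c) =
      - ((h * real (2^(n - k)) * real (2^(k - 2)))^2) *
        (\<Sum>a<2^k. \<Sum>b<2^(n+1-k). haar_test n h x k (b * 2^(k-1)) (a * 2^(n+1-k)))"
    using sum_prod_haar_test_cell_discrepancy[of "{k}" n h x] k \<open>h > 0\<close> by simp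
  also have "\<dots> = - (1/64) * (\<Sum>a<2^k. \<Sum>b<2^(n+1-k). if empty_box n h x k a b then 1 else 0::real)"
    unfolding corner height by (simp add: power2_eq_square)
  finally show ?thesis
    using count_empty_boxes_ge[OF \<open>h > 0\<close> k, of x] unfolding h_def by simp
qed

lemma grid_weight_le:
  fixes k K m n :: nat
  assumes "2 \<le> k" "k + m \<le> K" "K \<le> n"
  shows "(1/2^(n+1) * real (2^(n - K)) * real (2^(k - 2)))^2 * (2^K * 2^(n+1-k)) \<le> (2::real)^n / (32 * 2^m)"
proof -
  define P :: real where "P = 2^(n-K) * 2^(k-2)"
  have "P * P * 2^K * 2^(n+1-k) * (32 * 2^m) = (2::real)^((n-K)+(n-K)+(k-2)+(k-2)+K+(n+1-k)+5+m)"
    unfolding P_def by (simp only: power_add) simp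
  also have "\<dots> \<le> 2^(n+(n+1)+(n+1))"
    using assms by (intro power_increasing) auto
  also have "\<dots> = 2^n * (2^(n+1) * 2^(n+1))"
    by (simp only: power_add)
  finally have "P * P * 2^K * 2^(n+1-k) * (32 * 2^m) \<le> 2^n * (2^(n+1) * 2^(n+1))" .
  moreover have "1/2^(n+1) * real (2^(n - K)) * real (2^(k - 2)) = P / 2^(n+1)"
    unfolding P_def by simp
  ultimately show ?thesis
    by (simp add: field_simps power2_eq_square)
qed

lemma abs_sum_prod_haar_test_cell_discrepancy_le:
  assumes S: "finite S" "S \<noteq> {}" "\<And>k. k \<in> S \<Longrightarrow> 2 \<le> k \<and> k \<le> n" and gap: "Min S + m \<le> Max S"
  shows "\<bar>\<Sum>t<2^n. \<Sum>c<2^(n+1). (\<Prod>k\<in>S. haar_test n (1/2^(n+1)) x k t c) * cell_discrepancy (1/2^(n+1)) x (t+1) c\<bar>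
    \<le> 2^n / (32 * 2^m)"
proof -
  define h :: real where "h = 1/2^(n+1)"
  have "h > 0"
    unfolding h_def by simp
  define k K where "k = Min S" and "K = Max S"
  have k: "2 \<le> k" and K: "K \<le> n"
    using S unfolding k_def K_def by auto
  define \<kappa> where "\<kappa> a b = (\<Prod>k'\<in>S. haar_test n h x k' (b * 2^(k - 1)) (a * 2^(n+1-K)))" for a b
  define V where "V = h * real (2^(n - K)) * real (2^(k - 2))"
  have "\<bar>\<kappa> a b\<bar> \<le> 1" for a b
    unfolding \<kappa>_def abs_prod by (rule prod_le_1) (auto intro: abs_haar_test_le_1)
  then have "\<bar>\<Sum>a<2^K. \<Sum>b<2^(n+1-k). \<kappa> a b\<bar> \<le> (\<Sum>a<(2::nat)^K. \<Sum>b<(2::nat)^(n+1-k). 1)"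
    by (intro order_trans[OF sum_abs] sum_mono order_trans[OF sum_abs]) auto
  then have boxes: "\<bar>\<Sum>a<2^K. \<Sum>b<2^(n+1-k). \<kappa> a b\<bar> \<le> 2^K * 2^(n+1-k)"
    by simp
  have "(\<Sum>t<2^n. \<Sum>c<2^(n+1). (\<Prod>k\<in>S. haar_test n h x k t c) * cell_discrepancy h x (t+1) c) =
      - (V^2) * (\<Sum>a<2^K. \<Sum>b<2^(n+1-k). \<kappa> a b)"
    unfolding V_def \<kappa>_def k_def K_def by (rule sum_prod_haar_test_cell_discrepancy[OF S \<open>h > 0\<close>])
  then have "\<bar>\<Sum>t<2^n. \<Sum>c<2^(n+1). (\<Prod>k\<in>S. haar_test n h x k t c) * cell_discrepancy h x (t+1) c\<bar> =
      V^2 * \<bar>\<Sum>a<2^K. \<Sum>b<2^(n+1-k). \<kappa> a b\<bar>"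
    by (simp add: abs_mult)
  also have "\<dots> \<le> V^2 * (2^K * 2^(n+1-k))"
    using boxes by (rule mult_left_mono) simp
  also have "\<dots> \<le> 2^n / (32 * 2^m)"
    unfolding V_def h_def using k K gap by (intro grid_weight_le) (auto simp: k_def K_def)
  finally show ?thesis
    unfolding h_def .
qed

section \<open>Riesz products\<close>

definition riesz_product :: "nat set \<Rightarrow> real \<Rightarrow> (nat \<Rightarrow> real) \<Rightarrow> real" where
  "riesz_product L \<gamma> F = Im (\<Prod>k\<in>L. 1 + \<i> * complex_of_real (\<gamma> * F k))"

lemma riesz_product_expand:
  assumes "finite L"
  shows "riesz_product L \<gamma> F = (\<Sum>X\<in>Pow L. Im (\<i> ^ card X) * (\<gamma> ^ card X * (\<Prod>k\<in>X. F k)))"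
proof -
  have "(\<Prod>k\<in>L. 1 + \<i> * complex_of_real (\<gamma> * F k)) =
      (\<Sum>X\<in>Pow L. (\<Prod>k\<in>X. \<i> * complex_of_real (\<gamma> * F k)) * (\<Prod>k\<in>L - X. 1))"
    using prod_add[OF assms, of "\<lambda>k. \<i> * complex_of_real (\<gamma> * F k)" "\<lambda>_. 1"] by (simp add: add.commute)
  also have "\<dots> = (\<Sum>X\<in>Pow L. \<i> ^ card X * complex_of_real (\<gamma> ^ card X * (\<Prod>k\<in>X. F k)))"
    by (intro sum.cong refl) (simp add: prod.distrib)
  moreover have "Im (z * complex_of_real r) = Im z * r" for z r
    by simp
  ultimately show ?thesis
    unfolding riesz_product_def by (simp only: Im_sum)
qed

lemma abs_riesz_product_le_2:
  assumes "finite L" and F: "\<And>k. \<bar>F k\<bar> \<le> 1" and \<gamma>: "\<gamma>^2 * real (card L) \<le> 1"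
  shows "\<bar>riesz_product L \<gamma> F\<bar> \<le> 2"
proof -
  let ?z = "\<Prod>k\<in>L. 1 + \<i> * complex_of_real (\<gamma> * F k)"
  have "(cmod ?z)^2 = (\<Prod>k\<in>L. 1 + (\<gamma> * F k)^2)"
    by (simp add: prod_norm[symmetric] prod_power_distrib cmod_power2)
  also have "\<dots> \<le> (\<Prod>k\<in>L. 1 + \<gamma>^2)"
  proof (rule prod_mono)
    fix k
    have "\<gamma>^2 * (F k)^2 \<le> \<gamma>^2 * 1"
      using F[of k] by (intro mult_left_mono) (auto simp: abs_square_le_1)
    then show "0 \<le> 1 + (\<gamma> * F k)^2 \<and> 1 + (\<gamma> * F k)^2 \<le> 1 + \<gamma>^2"
      by (simp add: power_mult_distrib)
  qed
  also have "\<dots> = (1 + \<gamma>^2) ^ card L"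
    by simp
  also have "\<dots> \<le> exp (\<gamma>^2) ^ card L"
    by (rule power_mono) (auto simp: add.commute exp_ge_add_one_self)
  also have "\<dots> = exp (\<gamma>^2 * real (card L))"
    by (simp add: exp_of_nat_mult[symmetric] mult.commute)
  also have "\<dots> \<le> exp 1"
    using \<gamma> by simp
  also have "\<dots> \<le> 2^2"
    using exp_le by simp
  finally have "cmod ?z \<le> 2"
    by (rule power2_le_imp_le) simp
  then show ?thesis
    unfolding riesz_product_def using abs_Im_le_cmod[of ?z] by linarith
qed

lemma sum_riesz_product_expand:
  assumes "finite L"
  shows "(\<Sum>t<T. \<Sum>c<K. riesz_product L \<gamma> (\<lambda>k. F k t c) * G t c) =
    (\<Sum>X\<in>Pow L. Im (\<i> ^ card X) * \<gamma> ^ card X * (\<Sum>t<T. \<Sum>c<K. (\<Prod>k\<in>X. F k t c) * G t c))"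
proof -
  have "(\<Sum>t<T. \<Sum>c<K. riesz_product L \<gamma> (\<lambda>k. F k t c) * G t c) =
      (\<Sum>t<T. \<Sum>c<K. \<Sum>X\<in>Pow L. Im (\<i> ^ card X) * \<gamma> ^ card X * ((\<Prod>k\<in>X. F k t c) * G t c))"
    unfolding riesz_product_expand[OF assms] by (simp add: sum_distrib_right sum_distrib_left mult_ac)
  also have "\<dots> = (\<Sum>X\<in>Pow L. \<Sum>t<T. \<Sum>c<K. Im (\<i> ^ card X) * \<gamma> ^ card X * ((\<Prod>k\<in>X. F k t c) * G t c))"
    by (subst sum.swap) (simp add: sum.swap[of _ "Pow L"])
  finally show ?thesis
    by (simp add: sum_distrib_left)
qed

lemma sum_Pow_card_eq_1:
  assumes "finite L"
  shows "(\<Sum>X\<in>Pow L. if card X = 1 then f X else 0) = (\<Sum>k\<in>L. f {k})"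
proof -
  have "(\<Sum>X\<in>Pow L. if card X = 1 then f X else 0) = (\<Sum>X\<in>{X\<in>Pow L. card X = 1}. f X)"
    by (rule sum.inter_filter[symmetric]) (use assms in simp)
  also have "{X\<in>Pow L. card X = 1} = (\<lambda>k. {k}) ` L"
    by (auto simp: card_Suc_eq)
  also have "(\<Sum>X\<in>(\<lambda>k. {k}) ` L. f X) = (\<Sum>k\<in>L. f {k})"
    by (rule sum.reindex_cong[where l="\<lambda>k. {k}"]) (auto simp: inj_on_def)
  finally show ?thesis .
qed

definition levels :: "nat \<Rightarrow> nat set" where
  "levels m = (\<lambda>i. 2 + m * i) ` {..<m}"

lemma finite_levels: "finite (levels m)"
  unfolding levels_def by simp

lemma card_levels: "m \<ge> 1 \<Longrightarrow> card (levels m) = m"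
  unfolding levels_def by (subst card_image) (auto simp: inj_on_def)

lemma levels_range: "k \<in> levels m \<Longrightarrow> 2 \<le> k \<and> k \<le> 2 + m * m"
  unfolding levels_def by auto

lemma levels_gap:
  assumes X: "X \<subseteq> levels m" and card: "card X \<ge> 2"
  shows "Min X + m \<le> Max X"
proof -
  have X_finite: "finite X" and X_nonempty: "X \<noteq> {}"
    using X card finite_levels finite_subset by auto
  have "\<not> X \<subseteq> {Min X}"
    using card card_mono[of "{Min X}" X] by auto
  then obtain y where y: "y \<in> X" "y \<noteq> Min X"
    by blast
  have "Min X < Max X"
    using y Min_le[OF X_finite y(1)] Max_ge[OF X_finite y(1)] by linarith
  moreover obtain i0 where "Min X = 2 + m * i0"
    using Min_in[OF X_finite X_nonempty] X unfolding levels_def by blast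
  moreover obtain i1 where "Max X = 2 + m * i1"
    using Max_in[OF X_finite X_nonempty] X unfolding levels_def by blast
  ultimately show ?thesis
    using mult_le_mono2[of "i0 + 1" i1 m] by auto
qed

lemma riesz_higher_order_term_le:
  fixes \<gamma> :: real
  assumes X: "X \<subseteq> levels m" "card X \<ge> 2" and n: "n = 2 + m * m" and \<gamma>: "0 \<le> \<gamma>" "\<gamma> \<le> 1"
  shows "Im (\<i> ^ card X) * \<gamma> ^ card X * (\<Sum>t<2^n. \<Sum>c<2^(n+1).
      (\<Prod>k\<in>X. haar_test n (1/2^(n+1)) x k t c) * cell_discrepancy (1/2^(n+1)) x (t+1) c) \<le>
    2^n / (32 * 2^m)"
    (is "Im (\<i> ^ card X) * \<gamma> ^ card X * ?S \<le> ?B")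
proof -
  have "finite X" "X \<noteq> {}"
    using X finite_levels finite_subset by auto
  then have "\<bar>?S\<bar> \<le> ?B"
    using X levels_range n
    by (intro abs_sum_prod_haar_test_cell_discrepancy_le levels_gap) auto
  moreover have "\<bar>Im (\<i> ^ card X)\<bar> \<le> 1"
    using abs_Im_le_cmod[of "\<i> ^ card X"] by (simp add: norm_power)
  ultimately have "\<bar>Im (\<i> ^ card X)\<bar> * \<gamma> ^ card X * \<bar>?S\<bar> \<le> 1 * 1 * ?B"
    using \<gamma> by (intro mult_mono power_le_one) auto
  moreover have "Im (\<i> ^ card X) * \<gamma> ^ card X * ?S \<le> \<bar>Im (\<i> ^ card X)\<bar> * \<gamma> ^ card X * \<bar>?S\<bar>"
    using \<gamma> abs_ge_self[of "Im (\<i> ^ card X) * \<gamma> ^ card X * ?S"] by (simp add: abs_mult)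
  ultimately show ?thesis
    by simp
qed

text \<open>Each level contributes at most \<open>- 2^n / 64\<close> to the first-order terms of the Riesz
  product, while the products of two or more levels are negligible since the levels are \<open>m\<close>
  apart.\<close>

lemma sum_riesz_product_cell_discrepancy_le:
  fixes \<gamma> :: real
  assumes m: "m \<ge> 1" and n: "n = 2 + m * m" and \<gamma>: "0 \<le> \<gamma>" "\<gamma> \<le> 1"
  shows "(\<Sum>t<2^n. \<Sum>c<2^(n+1). riesz_product (levels m) \<gamma> (\<lambda>k. haar_test n (1/2^(n+1)) x k t c) *
      cell_discrepancy (1/2^(n+1)) x (t+1) c) \<le> - \<gamma> * real m * 2^n / 64 + 2^n / 32"
proof -
  define h :: real where "h = 1/2^(n+1)"
  define L where "L = levels m"
  define B :: real where "B = 2^n / (32 * 2^m)"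
  define S where "S X = (\<Sum>t<2^n. \<Sum>c<2^(n+1). (\<Prod>k\<in>X. haar_test n h x k t c) * cell_discrepancy h x (t+1) c)"
    for X
  have L: "finite L" "card L = m"
    unfolding L_def using finite_levels card_levels[OF m] by auto
  have term_le: "Im (\<i> ^ card X) * \<gamma> ^ card X * S X \<le>
      (if card X = 1 then \<gamma> * S X else 0) + (if card X = 1 then 0 else B)" if "X \<in> Pow L" for X
  proof -
    consider "card X = 0" | "card X = 1" | "card X \<ge> 2"
      by linarith
    then show ?thesis
    proof cases
      case 3
      then show ?thesis
        using that riesz_higher_order_term_le[OF _ 3 n \<gamma>] unfolding S_def B_def h_def L_def by auto
    qed (auto simp: B_def)
  qed
  have "(\<Sum>t<2^n. \<Sum>c<2^(n+1). riesz_product L \<gamma> (\<lambda>k. haar_test n h x k t c) * cell_discrepancy h x (t+1) c) =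
      (\<Sum>X\<in>Pow L. Im (\<i> ^ card X) * \<gamma> ^ card X * S X)"
    unfolding S_def by (rule sum_riesz_product_expand[OF L(1)])
  also have "\<dots> \<le> (\<Sum>X\<in>Pow L. (if card X = 1 then \<gamma> * S X else 0)) + (\<Sum>X\<in>Pow L. if card X = 1 then 0 else B)"
    unfolding sum.distrib[symmetric] by (rule sum_mono) (rule term_le)
  also have "\<dots> = (\<Sum>k\<in>L. \<gamma> * S {k}) + (\<Sum>X\<in>Pow L. if card X = 1 then 0 else B)"
    by (simp only: sum_Pow_card_eq_1[OF L(1)])
  also have "\<dots> \<le> (\<Sum>k\<in>L. \<gamma> * (- (2^n / 64))) + (\<Sum>X\<in>Pow L. B)"
  proof (intro add_mono sum_mono)
    fix k assume "k \<in> L"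
    then have "S {k} \<le> - (2^n / 64)"
      unfolding S_def h_def L_def using sum_haar_test_cell_discrepancy_le[of k n x] levels_range n by simp
    then show "\<gamma> * S {k} \<le> \<gamma> * (- (2^n / 64))"
      using \<gamma> by (intro mult_left_mono) auto
  qed (simp add: B_def)
  also have "\<dots> = - \<gamma> * real m * 2^n / 64 + 2^n / 32"
    using L by (simp add: card_Pow B_def field_simps)
  finally show ?thesis
    unfolding h_def L_def .
qed

lemma unbounded_cell_discrepancy:
  fixes x :: "nat \<Rightarrow> real" and B :: real
  shows "\<exists>n t g. (\<forall>c. \<bar>g c\<bar> \<le> 2) \<and>
    B < \<bar>\<Sum>c<2^(n+1). g c * cell_discrepancy (1/2^(n+1)) x (t+1) c\<bar>"
proof (rule ccontr)
  assume "\<not> ?thesis"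
  then have bounded: "\<bar>\<Sum>c<2^(n+1). g c * cell_discrepancy (1/2^(n+1)) x (t+1) c\<bar> \<le> B"
    if "\<And>c. \<bar>g c\<bar> \<le> 2" for n t g
    using that by (auto simp: not_less)
  define r :: nat where "r = nat \<lceil>64 * \<bar>B\<bar>\<rceil> + 3"
  define m where "m = r * r"
  define n where "n = 2 + m * m"
  define \<gamma> :: real where "\<gamma> = 1 / real r"
  have r: "real r \<ge> 64 * \<bar>B\<bar> + 3"
    unfolding r_def by linarith
  then have "real r \<ge> 1"
    using abs_ge_zero[of B] by linarith
  then have m: "m \<ge> 1" and \<gamma>: "0 \<le> \<gamma>" "\<gamma> \<le> 1" and \<gamma>_m: "\<gamma> * real m = real r"
    by (auto simp: m_def \<gamma>_def)
  define Q where "Q = (\<Sum>t<2^n. \<Sum>c<2^(n+1). riesz_product (levels m) \<gamma>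
    (\<lambda>k. haar_test n (1/2^(n+1)) x k t c) * cell_discrepancy (1/2^(n+1)) x (t+1) c)"
  have "\<gamma>^2 * real (card (levels m)) \<le> 1"
    using m by (simp add: card_levels m_def \<gamma>_def power2_eq_square)
  then have "\<bar>riesz_product (levels m) \<gamma> (\<lambda>k. haar_test n (1/2^(n+1)) x k t c)\<bar> \<le> 2" for t c
    by (intro abs_riesz_product_le_2 finite_levels abs_haar_test_le_1)
  then have "\<bar>Q\<bar> \<le> (\<Sum>t<(2::nat)^n. B)"
    unfolding Q_def by (intro order_trans[OF sum_abs] sum_mono bounded)
  then have "- (2^n * B) \<le> Q"
    by simp
  moreover have "Q \<le> - real r * 2^n / 64 + 2^n / 32"
    unfolding Q_def using sum_riesz_product_cell_discrepancy_le[OF m n_def \<gamma>] \<gamma>_m by (simp add: mult.assoc)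
  ultimately have "real r * 2^n \<le> 2^n * (64 * B + 2)"
    by (simp add: field_simps)
  then have "real r \<le> 64 * B + 2"
    by simp
  with r show False
    by linarith
qed

lemma no_Wp_one_rate:
  assumes x: "\<forall>n\<ge>1. x n \<in> {0..1}"
    and W: "\<And>N. N \<ge> 1 \<Longrightarrow> Wp 1 (empirical x N) lambda1 \<le> C / real N"
  shows False
proof -
  obtain n t g where g: "\<forall>c. \<bar>g c\<bar> \<le> 2"
    and large: "2 * C < \<bar>\<Sum>c<2^(n+1). g c * cell_discrepancy (1/2^(n+1)) x (t+1) c\<bar>"
    using unbounded_cell_discrepancy[of "2 * C" x] by blast
  have "\<bar>\<Sum>c<2^(n+1). g c * cell_discrepancy (1/2^(n+1)) x (t+1) c\<bar> \<le> 2 * C"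
    using g by (intro abs_sum_weighted_cell_discrepancy_le[OF _ x W]) auto
  with large show False
    by simp
qed

theorem proposition1p5:
  shows "(\<forall>p::real. 1 \<le> p \<longrightarrow>
            \<not> (\<exists>(x::nat \<Rightarrow> real) (C::real). (\<forall>n\<ge>1. x n \<in> {0..1}) \<and>
                  (\<forall>N::nat\<ge>1. Wp p (empirical x N) lambda1 \<le> C * (1 / real N))))
       \<and> \<not> (\<exists>(x::nat \<Rightarrow> real) (C::real). (\<forall>n\<ge>1. x n \<in> {0..1}) \<and>
                  (\<forall>N::nat\<ge>1. Winf (empirical x N) lambda1 \<le> ereal (C * (1 / real N))))"
proof (intro conjI allI impI notI; elim exE conjE)
  fix p C :: real and x :: "nat \<Rightarrow> real"
  assume p: "1 \<le> p" and x: "\<forall>n\<ge>1. x n \<in> {0..1}"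
    and W: "\<forall>N\<ge>1. Wp p (empirical x N) lambda1 \<le> C * (1 / real N)"
  show False
  proof (rule no_Wp_one_rate[OF x])
    fix N :: nat assume N: "N \<ge> 1"
    have "Wp p (empirical x N) lambda1 \<le> C / real N"
      using W N by simp
    then show "Wp 1 (empirical x N) lambda1 \<le> C / real N"
      using Wp_one_le_Wp[OF prob_on_unit_interval_empirical[OF N x] prob_on_unit_interval_lambda1 p]
      by linarith
  qed
next
  fix C :: real and x :: "nat \<Rightarrow> real"
  assume x: "\<forall>n\<ge>1. x n \<in> {0..1}"
    and W: "\<forall>N\<ge>1. Winf (empirical x N) lambda1 \<le> ereal (C * (1 / real N))"
  show False
  proof (rule no_Wp_one_rate[OF x])
    fix N :: nat assume N: "N \<ge> 1"
    show "Wp 1 (empirical x N) lambda1 \<le> C / real N"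
      using Wp_one_le_Winf[OF prob_on_unit_interval_empirical[OF N x] prob_on_unit_interval_lambda1] W N
      by (metis ereal_less_eq(3) order_trans times_divide_eq_right mult_1_right)
  qed
qed

end
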